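(* Let $k\ge2$, let $\chi_1,\chi_2$ be primitive non-trivial Dirichlet characters with conductors $q_1,q_2$ and $\chi_1\chi_2(-1)=(-1)^k$. For $\gamma\in\Gamma_\infty$ and $\gamma'\in\Gamma_0(q_1q_2)$ with nonzero lower-left entry, $S_{\chi_1,\chi_2,k}(\gamma\gamma')=S_{\chi_1,\chi_2,k}(\gamma')$.
   Context: $\Gamma_\infty=\{\pm\begin{pmatrix}1&n\\0&1\end{pmatrix}:n\in\mathbb Z\}$. Notation: $e(z)=\exp(2\pi iz)$, $\tau(\chi)$ the Gauss sum. $E_{\chi_1,\chi_2,k}(z)=2\sum_{N\ge1}\sum_{A\mid N}\chi_1(A)\overline{\chi_2}(N/A)(N/A)^{k-1}e(Nz)$ on the upper half plane; $P_{k-2}(z;X,Y)=(Xz+Y)^{k-2}$. For $\gamma=\begin{pmatrix}a&b\\c&d\end{pmatrix}\in\Gamma_0(q_1q_2)$ with $c\ne0$, $S_{\chi_1,\chi_2,k}(\gamma)=(-1)^k\tau(\overline{\chi_1})(k-1)\int_\infty^{\gamma\infty}E_{\chi_1,\chi_2,k}(z)P_{k-2}(z;1,-a/c)dz$. *)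

theory Defs
  imports "HOL-Analysis.Analysis" "HOL-Number_Theory.Cong"
begin

definition e :: "complex \<Rightarrow> complex" where
  "e z = exp (2 * of_real pi * \<i> * z)"

definition dirichlet_character :: "nat \<Rightarrow> (int \<Rightarrow> complex) \<Rightarrow> bool" where
  "dirichlet_character q chi \<longleftrightarrow>
     q > 0 \<and> chi 1 = 1 \<and>
     (\<forall>m n. chi (m * n) = chi m * chi n) \<and>
     (\<forall>n. chi (n + int q) = chi n) \<and>
     (\<forall>n. chi n = 0 \<longleftrightarrow> \<not> coprime n (int q))"

definition induced_modulus :: "nat \<Rightarrow> (int \<Rightarrow> complex) \<Rightarrow> nat \<Rightarrow> bool" where
  "induced_modulus q chi d \<longleftrightarrow>
     (\<forall>m n. coprime m (int q) \<longrightarrow> coprime n (int q) \<longrightarrow> [m = n] (mod int d) \<longrightarrow> chi m = chi n)"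

definition primitive_character :: "nat \<Rightarrow> (int \<Rightarrow> complex) \<Rightarrow> bool" where
  "primitive_character q chi \<longleftrightarrow>
     dirichlet_character q chi \<and> (\<forall>d. d dvd q \<and> d < q \<longrightarrow> \<not> induced_modulus q chi d)"

definition nontrivial_character :: "(int \<Rightarrow> complex) \<Rightarrow> bool" where
  "nontrivial_character chi \<longleftrightarrow> (\<exists>n. chi n \<noteq> 0 \<and> chi n \<noteq> 1)"

definition gauss_sum :: "nat \<Rightarrow> (int \<Rightarrow> complex) \<Rightarrow> complex" where
  "gauss_sum q chi = (\<Sum>n<q. chi (int n) * e (of_nat n / of_nat q))"

definition eisenstein ::
  "(int \<Rightarrow> complex) \<Rightarrow> (int \<Rightarrow> complex) \<Rightarrow> nat \<Rightarrow> complex \<Rightarrow> complex" where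
  "eisenstein chi1 chi2 k z =
     2 * (\<Sum>M. let N = Suc M in
            (\<Sum>A\<in>{A. A dvd N}. chi1 (int A) * cnj (chi2 (int (N div A))) * of_nat (N div A) ^ (k - 1))
            * e (of_nat N * z))"

(* 2x2 integer matrices (a,b,c,d) *)
type_synonym mat2 = "int \<times> int \<times> int \<times> int"

definition mat2_mult :: "mat2 \<Rightarrow> mat2 \<Rightarrow> mat2" where
  "mat2_mult M M' = (case M of (a,b,c,d) \<Rightarrow> case M' of (a',b',c',d') \<Rightarrow>
      (a*a' + b*c', a*b' + b*d', c*a' + d*c', c*b' + d*d'))"

definition Gamma0 :: "nat \<Rightarrow> mat2 set" where
  "Gamma0 N = {(a,b,c,d). a*d - b*c = 1 \<and> int N dvd c}"

definition Gamma_infty :: "mat2 set" where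
  "Gamma_infty = {M. \<exists>n::int. M = (1,n,0,1) \<or> M = (-1,-n,0,-1)}"

(* integral from infinity to the cusp r (real), along the vertical line Re z = r:
   int_oo^r f(z) dz = - int_0^oo f(r + i t) i dt *)
definition integral_from_infty :: "(complex \<Rightarrow> complex) \<Rightarrow> real \<Rightarrow> complex" where
  "integral_from_infty f r = - integral {0<..} (\<lambda>t::real. f (of_real r + \<i> * of_real t) * \<i>)"

(* S_{chi1,chi2,k}(gamma) for gamma = (a,b,c,d) with c \<noteq> 0;
   P_{k-2}(z;1,-a/c) = (z - a/c)^(k-2) *)
definition S_sym ::
  "nat \<Rightarrow> (int \<Rightarrow> complex) \<Rightarrow> (int \<Rightarrow> complex) \<Rightarrow> nat \<Rightarrow> mat2 \<Rightarrow> complex" where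
  "S_sym q1 chi1 chi2 k M = (case M of (a,b,c,d) \<Rightarrow>
     (-1) ^ k * gauss_sum q1 (\<lambda>n. cnj (chi1 n)) * of_nat (k - 1) *
     integral_from_infty
       (\<lambda>z. eisenstein chi1 chi2 k z * (z - of_real (real_of_int a / real_of_int c)) ^ (k - 2))
       (real_of_int a / real_of_int c))"

end

theory Submission
  imports Defs
begin

text \<open>The only input is the 1-periodicity of \<open>E\<^sub>\<chi>\<^sub>1\<^sub>,\<^sub>\<chi>\<^sub>2\<^sub>,\<^sub>k\<close>: left multiplication by an
  element of \<open>\<Gamma>\<^sub>\<infinity>\<close> moves the cusp \<open>\<gamma>'\<infinity> = a/c\<close> by an integer \<open>n\<close>, and translating the
  vertical path of integration by \<open>n\<close> leaves the integrand \<open>E(z) (z - a/c)\<^sup>k\<^sup>-\<^sup>2\<close> unchanged.\<close>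

lemma e_add_of_int: "e (z + of_int n) = e z"
proof -
  have "e (z + of_int n) = exp (2 * of_real pi * \<i> * z + \<i> * (of_int n * (of_real pi * 2)))"
    unfolding e_def by (simp add: algebra_simps)
  also have "\<dots> = e z"
    unfolding e_def by (rule exp_plus_2pin)
  finally show ?thesis .
qed

lemma eisenstein_add_of_int:
  "eisenstein chi1 chi2 k (z + of_int n) = eisenstein chi1 chi2 k z"
proof -
  have "e (of_nat N * (z + of_int n)) = e (of_nat N * z)" for N
    using e_add_of_int[of "of_nat N * z" "int N * n"] by (simp add: algebra_simps)
  then show ?thesis
    unfolding eisenstein_def Let_def by (simp only:)
qed

lemma integral_from_infty_shift_of_int:
  assumes periodic: "\<And>z. f (z + of_int n) = f z"
  shows "integral_from_infty (\<lambda>z. f z * (z - of_real (r + of_int n)) ^ m) (r + of_int n)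
       = integral_from_infty (\<lambda>z. f z * (z - of_real r) ^ m) r"
proof -
  have "f (of_real (r + of_int n) + \<i> * of_real t) = f (of_real r + \<i> * of_real t)" for t
    using periodic[of "of_real r + \<i> * of_real t"] by (simp add: algebra_simps)
  then show ?thesis
    unfolding integral_from_infty_def by simp
qed

text \<open>The cusp \<open>\<gamma>\<infinity> = a/c\<close> of \<open>\<gamma> = (a,b,c,d)\<close>; junk value \<open>0\<close> when \<open>c = 0\<close>.\<close>

definition mat2_cusp :: "mat2 \<Rightarrow> real" where
  "mat2_cusp M = (case M of (a, b, c, d) \<Rightarrow> real_of_int a / real_of_int c)"

lemma S_sym_eq_integral_at_cusp:
  "S_sym q1 chi1 chi2 k M =
     (-1) ^ k * gauss_sum q1 (\<lambda>n. cnj (chi1 n)) * of_nat (k - 1) *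
     integral_from_infty
       (\<lambda>z. eisenstein chi1 chi2 k z * (z - of_real (mat2_cusp M)) ^ (k - 2)) (mat2_cusp M)"
  unfolding S_sym_def mat2_cusp_def by (simp split: prod.split)

lemma mat2_cusp_Gamma_infty_mult:
  assumes "\<gamma> \<in> Gamma_infty" and "fst (snd (snd M)) \<noteq> 0"
  obtains n :: int where "mat2_cusp (mat2_mult \<gamma> M) = mat2_cusp M + of_int n"
proof -
  obtain a b c d where M: "M = (a, b, c, d)" by (cases M) auto
  with assms(2) have "c \<noteq> 0" by simp
  from assms(1) obtain n :: int where "\<gamma> = (1, n, 0, 1) \<or> \<gamma> = (-1, -n, 0, -1)"
    unfolding Gamma_infty_def by auto
  with M \<open>c \<noteq> 0\<close> have "mat2_cusp (mat2_mult \<gamma> M) = mat2_cusp M + of_int n"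
    by (auto simp: mat2_mult_def mat2_cusp_def field_simps)
  then show thesis by (rule that)
qed

theorem lemma5p3:
  fixes k q1 q2 :: nat and chi1 chi2 :: "int \<Rightarrow> complex" and \<gamma> \<gamma>' :: mat2
  assumes "k \<ge> 2"
    and "primitive_character q1 chi1" and "nontrivial_character chi1"
    and "primitive_character q2 chi2" and "nontrivial_character chi2"
    and "chi1 (-1) * chi2 (-1) = (-1) ^ k"
    and "\<gamma> \<in> Gamma_infty"
    and "\<gamma>' \<in> Gamma0 (q1 * q2)" and "fst (snd (snd \<gamma>')) \<noteq> 0"
  shows "S_sym q1 chi1 chi2 k (mat2_mult \<gamma> \<gamma>') = S_sym q1 chi1 chi2 k \<gamma>'"
proof -
  obtain n :: int where cusp: "mat2_cusp (mat2_mult \<gamma> \<gamma>') = mat2_cusp \<gamma>' + of_int n"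
    using mat2_cusp_Gamma_infty_mult[OF assms(7,9)] .
  have "integral_from_infty
          (\<lambda>z. eisenstein chi1 chi2 k z * (z - of_real (mat2_cusp \<gamma>' + of_int n)) ^ (k - 2))
          (mat2_cusp \<gamma>' + of_int n)
      = integral_from_infty
          (\<lambda>z. eisenstein chi1 chi2 k z * (z - of_real (mat2_cusp \<gamma>')) ^ (k - 2)) (mat2_cusp \<gamma>')"
    by (rule integral_from_infty_shift_of_int) (rule eisenstein_add_of_int)
  then show ?thesis
    unfolding S_sym_eq_integral_at_cusp cusp by simp
qed

end
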